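(* Let $X$ be a real Hilbert space, $A,B\colon X\rightrightarrows X$ maximally monotone, $T:=\operatorname{Id}-J_A+J_BR_A$, $v:=P_{\overline{\operatorname{ran}}(\operatorname{Id}-T)}(0)$, $D:=\operatorname{dom}A-\operatorname{dom}B$, $R:=\operatorname{ran}A+\operatorname{ran}B$, $v_D:=P_{\overline D}(0)$, $v_R:=P_{\overline R}(0)$, and assume $\overline{\operatorname{ran}}(\operatorname{Id}-T)=\overline{D\cap R}=\overline D\cap\overline R$. Set $Z:=\{x\in X: 0\in -v+Ax+B(x-v)\}$ and $\widetilde Z:=\{x\in X: 0\in -v_R+Ax+B(x-v_D)\}$. Then (i) $\widetilde Z\subseteq Z$; (ii) if $v_R=0$, then $\widetilde Z=Z$.
   Context: $J_C:=(\operatorname{Id}+C)^{-1}$ is the resolvent and $R_C:=2J_C-\operatorname{Id}$ the reflected resolvent of a maximally monotone operator $C$. $P_S$ denotes the projection onto a nonempty closed convex set $S$; the closures $\overline D,\overline R$ are convex. $\overline{\operatorname{ran}}$ denotes closure of the range. *)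

theory Defs
  imports "HOL-Analysis.Analysis"
begin

definition monotone_op :: "('a::real_inner \<Rightarrow> 'a set) \<Rightarrow> bool" where
  "monotone_op A \<longleftrightarrow>
     (\<forall>x y u w. u \<in> A x \<longrightarrow> w \<in> A y \<longrightarrow> 0 \<le> inner (x - y) (u - w))"

definition maximal_monotone :: "('a::real_inner \<Rightarrow> 'a set) \<Rightarrow> bool" where
  "maximal_monotone A \<longleftrightarrow> monotone_op A \<and>
     (\<forall>B. monotone_op B \<and> (\<forall>x. A x \<subseteq> B x) \<longrightarrow> B = A)"

definition op_dom :: "('a \<Rightarrow> 'b set) \<Rightarrow> 'a set" where
  "op_dom A = {x. A x \<noteq> {}}"

definition op_ran :: "('a \<Rightarrow> 'b set) \<Rightarrow> 'b set" where
  "op_ran A = (\<Union>x. A x)"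

text \<open>Resolvent J_A = (Id + A)^{-1}: J_A x is the (unique, for maximally monotone A)
  y with x \<in> y + A y.\<close>
definition resolvent :: "('a::real_vector \<Rightarrow> 'a set) \<Rightarrow> 'a \<Rightarrow> 'a" where
  "resolvent A x = (THE y. x - y \<in> A y)"

definition refl_resolvent :: "('a::real_vector \<Rightarrow> 'a set) \<Rightarrow> 'a \<Rightarrow> 'a" where
  "refl_resolvent A x = 2 *\<^sub>R resolvent A x - x"

definition DR_op :: "('a::real_vector \<Rightarrow> 'a set) \<Rightarrow> ('a \<Rightarrow> 'a set) \<Rightarrow> 'a \<Rightarrow> 'a" where
  "DR_op A B x = x - resolvent A x + resolvent B (refl_resolvent A x)"

text \<open>Metric projection P_S (the library's closest_point needs heine_borel, i.e.
  finite dimension; this is the same definition on a general inner product space).\<close>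
definition proj :: "'a::real_inner set \<Rightarrow> 'a \<Rightarrow> 'a" where
  "proj S x = (SOME y. y \<in> S \<and> (\<forall>z\<in>S. dist x y \<le> dist x z))"

end

theory Submission
  imports Defs
begin

text \<open>For maximally monotone operators the closures of domain and range are convex; this follows
  from Minty's theorem (the resolvents \<open>J\<^sub>\<lambda>\<^sub>A\<close> are everywhere defined), obtained here by minimising
  the Fitzpatrick function plus half the squared norm. Hence \<open>vD\<close> and \<open>vR\<close> are characterised by
  the obtuse-angle inequalities \<open>\<langle>s - vD, vD\<rangle> \<ge> 0\<close> on \<open>closure D\<close> and \<open>\<langle>s - vR, vR\<rangle> \<ge> 0\<close> on
  \<open>closure R\<close>.

  Let \<open>a \<in> A x\<close>, \<open>b \<in> B (x - vD)\<close> and \<open>a + b = vR\<close>. The inequalities say that \<open>-vD\<close> is normal to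
  \<open>dom A\<close> at \<open>x\<close> and \<open>-vR\<close> is normal to \<open>ran B\<close> at \<open>b\<close>, so by maximality \<open>a - vD \<in> A x\<close> and
  \<open>b \<in> B (x - vD - vR)\<close>; from this \<open>vD \<perp> vR\<close> and then \<open>b + vD \<in> B (x - vD - vR)\<close>. Now
  \<open>vD + vR \<in> D \<inter> R\<close> satisfies the obtuse-angle inequality on \<open>closure (D \<inter> R)\<close>, i.e. \<open>v = vD + vR\<close>,
  and \<open>x \<in> Z\<close>. If \<open>vR = 0\<close>, then \<open>dom B\<close> is bounded in the direction \<open>vD\<close>, which is therefore a
  recession direction of \<open>closure R \<ni> 0\<close>; thus \<open>vD \<in> closure D \<inter> closure R = closure (D \<inter> R)\<close>,
  \<open>v = vD\<close>, and \<open>a - vD \<in> A x\<close> turns every point of \<open>Z\<close> into one of \<open>Zt\<close>.\<close>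

section \<open>Maximal monotone operators\<close>

definition op_graph :: "('a \<Rightarrow> 'b set) \<Rightarrow> ('a \<times> 'b) set" where
  "op_graph A = {(x, u). u \<in> A x}"

lemma maximal_monotone_iff:
  "maximal_monotone A \<longleftrightarrow> monotone_op A \<and>
     (\<forall>x u. (\<forall>y w. w \<in> A y \<longrightarrow> 0 \<le> inner (x - y) (u - w)) \<longrightarrow> u \<in> A x)"
proof
  assume max: "maximal_monotone A"
  then have mono: "monotone_op A" by (simp add: maximal_monotone_def)
  show "monotone_op A \<and> (\<forall>x u. (\<forall>y w. w \<in> A y \<longrightarrow> 0 \<le> inner (x - y) (u - w)) \<longrightarrow> u \<in> A x)"
  proof (intro conjI mono allI impI)
    fix x u assume rel: "\<forall>y w. w \<in> A y \<longrightarrow> 0 \<le> inner (x - y) (u - w)"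
    define B where "B = A(x := insert u (A x))"
    have "inner (p - x) (a - u) = inner (x - p) (u - a)" for p a :: 'a
      by (metis inner_minus_left inner_minus_right minus_diff_eq minus_minus)
    then have "monotone_op B"
      using mono rel by (auto simp: monotone_op_def B_def)
    moreover have "\<forall>z. A z \<subseteq> B z" by (auto simp: B_def)
    ultimately have "B = A" using max unfolding maximal_monotone_def by blast
    then show "u \<in> A x" by (metis B_def fun_upd_same insertI1)
  qed
next
  assume "monotone_op A \<and> (\<forall>x u. (\<forall>y w. w \<in> A y \<longrightarrow> 0 \<le> inner (x - y) (u - w)) \<longrightarrow> u \<in> A x)"
  then have mono: "monotone_op A"
    and memI: "\<And>x u. (\<And>y w. w \<in> A y \<Longrightarrow> 0 \<le> inner (x - y) (u - w)) \<Longrightarrow> u \<in> A x"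
    by blast+
  show "maximal_monotone A" unfolding maximal_monotone_def
  proof (intro conjI mono allI impI)
    fix B assume B: "monotone_op B \<and> (\<forall>x. A x \<subseteq> B x)"
    show "B = A"
    proof (intro ext equalityI subsetI)
      fix z b assume "b \<in> B z"
      then show "b \<in> A z" using B by (intro memI) (auto simp: monotone_op_def subset_iff)
    qed (use B in auto)
  qed
qed

lemma maximal_monotoneD:
  assumes "maximal_monotone A" "u \<in> A x" "w \<in> A y"
  shows "0 \<le> inner (x - y) (u - w)"
  using assms unfolding maximal_monotone_def monotone_op_def by blast

lemma maximal_monotone_memI:
  assumes "maximal_monotone A" "\<And>y w. w \<in> A y \<Longrightarrow> 0 \<le> inner (x - y) (u - w)"
  shows "u \<in> A x"
  using assms maximal_monotone_iff by blast

lemma maximal_monotone_graph_nonempty: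
  assumes "maximal_monotone (A :: 'a::real_inner \<Rightarrow> 'a set)"
  shows "op_graph A \<noteq> {}"
proof
  assume "op_graph A = {}"
  moreover from this have "0 \<in> A 0"
    by (intro maximal_monotone_memI[OF assms]) (auto simp: op_graph_def)
  ultimately show False by (auto simp: op_graph_def)
qed

lemma maximal_monotone_scale_shift:
  fixes A :: "'a::real_inner \<Rightarrow> 'a set"
  assumes max: "maximal_monotone A" and l: "l > 0"
  shows "maximal_monotone (\<lambda>y. (\<lambda>a. l *\<^sub>R a - z) ` A y)"
  unfolding maximal_monotone_iff
proof (intro conjI allI impI)
  show "monotone_op (\<lambda>y. (\<lambda>a. l *\<^sub>R a - z) ` A y)"
    unfolding monotone_op_def using maximal_monotoneD[OF max] l
    by (force simp flip: scaleR_diff_right)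
  have scale: "inner (x - y) ((l *\<^sub>R a - z) - (l *\<^sub>R b - z)) = l * inner (x - y) (a - b)"
    for x y a b :: 'a
    by (simp add: inner_diff_right algebra_simps)
  fix x u
  assume rel: "\<forall>y w. w \<in> (\<lambda>a. l *\<^sub>R a - z) ` A y \<longrightarrow> 0 \<le> inner (x - y) (u - w)"
  have "(1/l) *\<^sub>R (u + z) \<in> A x"
  proof (rule maximal_monotone_memI[OF max])
    fix y w assume "w \<in> A y"
    then have "0 \<le> inner (x - y) ((l *\<^sub>R ((1/l) *\<^sub>R (u + z)) - z) - (l *\<^sub>R w - z))"
      using rel l by auto
    then show "0 \<le> inner (x - y) ((1/l) *\<^sub>R (u + z) - w)"
      unfolding scale using l by (simp add: zero_le_mult_iff)
  qed
  moreover have "u = l *\<^sub>R ((1/l) *\<^sub>R (u + z)) - z" using l by simp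
  ultimately show "u \<in> (\<lambda>a. l *\<^sub>R a - z) ` A x" by blast
qed

lemma maximal_monotone_converse:
  fixes A :: "'a::real_inner \<Rightarrow> 'a set"
  assumes max: "maximal_monotone A"
  shows "maximal_monotone (\<lambda>u. {x. u \<in> A x})"
  unfolding maximal_monotone_iff monotone_op_def
  using maximal_monotoneD[OF max] maximal_monotone_memI[OF max]
  by (auto simp: inner_commute)

lemma maximal_monotone_add_normal:
  assumes "maximal_monotone A" "a \<in> A x" "\<And>y. y \<in> op_dom A \<Longrightarrow> inner y e \<le> inner x e"
  shows "a + e \<in> A x"
proof (rule maximal_monotone_memI[OF assms(1)])
  fix y w assume w: "w \<in> A y"
  then have "0 \<le> inner (x - y) (a - w)" "inner y e \<le> inner x e"
    using assms maximal_monotoneD by (auto simp: op_dom_def)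
  then show "0 \<le> inner (x - y) (a + e - w)"
    by (simp add: inner_diff_left inner_diff_right inner_add_right inner_commute)
qed

lemma maximal_monotone_shift_point:
  assumes "maximal_monotone A" "a \<in> A x" "\<And>w. w \<in> op_ran A \<Longrightarrow> inner w d \<le> inner a d"
  shows "a \<in> A (x + d)"
proof (rule maximal_monotone_memI[OF assms(1)])
  fix y w assume w: "w \<in> A y"
  then have "0 \<le> inner (x - y) (a - w)" "inner w d \<le> inner a d"
    using assms maximal_monotoneD by (auto simp: op_ran_def)
  then show "0 \<le> inner (x + d - y) (a - w)"
    by (simp add: inner_diff_left inner_diff_right inner_add_left inner_add_right inner_commute)
qed

section \<open>Minimal norm points of closed convex sets\<close>

lemma nonneg_if_nonneg_perturbations:
  fixes c N :: real
  assumes "\<And>t. 0 < t \<Longrightarrow> t \<le> 1 \<Longrightarrow> 0 \<le> c + t * N"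
  shows "0 \<le> c"
proof (rule LIMSEQ_le_const)
  have "(\<lambda>n. c + 1 / real (Suc n) * N) \<longlonglongrightarrow> c + 0 * N"
    by (intro tendsto_intros LIMSEQ_Suc[OF lim_1_over_n])
  then show "(\<lambda>n. c + 1 / real (Suc n) * N) \<longlonglongrightarrow> c" by simp
  have "0 \<le> c + 1 / real (Suc n) * N" for n by (rule assms) simp_all
  then show "\<exists>M. \<forall>n\<ge>M. 0 \<le> c + 1 / real (Suc n) * N" by blast
qed

lemma Cauchy_if_dist_sq_le:
  fixes P :: "nat \<Rightarrow> 'a::metric_space"
  assumes dist: "\<And>n k. (dist (P n) (P k))\<^sup>2 \<le> e n + e k" and e: "e \<longlonglongrightarrow> 0"
  shows "Cauchy P"
proof (rule metric_CauchyI)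
  fix r :: real assume "r > 0"
  then obtain N where N: "\<And>n. n \<ge> N \<Longrightarrow> \<bar>e n\<bar> < r\<^sup>2 / 2"
    using e unfolding LIMSEQ_iff by (metis diff_zero half_gt_zero real_norm_def zero_less_power)
  have "dist (P n) (P k) < r" if "n \<ge> N" "k \<ge> N" for n k
  proof (rule power2_less_imp_less)
    show "(dist (P n) (P k))\<^sup>2 < r\<^sup>2" using dist[of n k] N[OF that(1)] N[OF that(2)] by linarith
  qed (use \<open>r > 0\<close> in simp)
  then show "\<exists>N. \<forall>n\<ge>N. \<forall>k\<ge>N. dist (P n) (P k) < r" by blast
qed

lemma convex_midpoint_mem:
  assumes "convex K" "p \<in> K" "q \<in> K"
  shows "midpoint p q \<in> K"
proof -
  have "midpoint p q = (1/2) *\<^sub>R p + (1/2) *\<^sub>R q"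
    by (simp add: midpoint_def scaleR_add_right)
  then show ?thesis using convexD[OF assms, of "1/2" "1/2"] by simp
qed

lemma strongly_convex_minimizing_sequence:
  fixes g :: "'a::{real_inner,complete_space} \<Rightarrow> real"
  assumes K: "convex K" "K \<noteq> {}" and bdd: "\<And>p. p \<in> K \<Longrightarrow> b \<le> g p"
    and mid: "\<And>p q. p \<in> K \<Longrightarrow> q \<in> K \<Longrightarrow>
      g (midpoint p q) + (norm (p - q))\<^sup>2 / 8 \<le> (g p + g q) / 2"
  obtains P p m where "\<And>n. P n \<in> K" "P \<longlonglongrightarrow> p" "(\<lambda>n. g (P n)) \<longlonglongrightarrow> m"
    "\<And>q. q \<in> K \<Longrightarrow> m \<le> g q"
proof -
  define m where "m = Inf (g ` K)"
  have m_le: "m \<le> g q" if "q \<in> K" for q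
    unfolding m_def using bdd by (intro cINF_lower[OF _ that] bdd_belowI2)
  have "\<exists>q\<in>K. g q < m + 1 / Suc n" for n
    using cInf_lessD[of "g ` K" "m + 1 / Suc n"] K(2) by (auto simp: m_def)
  then obtain P where P: "\<And>n. P n \<in> K" "\<And>n. g (P n) < m + 1 / Suc n" by metis
  have "(\<lambda>n. m + 1 / real (Suc n)) \<longlonglongrightarrow> m + 0"
    by (intro tendsto_intros LIMSEQ_Suc[OF lim_1_over_n])
  moreover have "\<forall>n. m \<le> g (P n)" "\<forall>n. g (P n) \<le> m + 1 / Suc n"
    using P m_le less_imp_le by blast+
  ultimately have gP: "(\<lambda>n. g (P n)) \<longlonglongrightarrow> m"
    using real_tendsto_sandwich[OF always_eventually always_eventually tendsto_const] by simp
  have "(dist (P n) (P k))\<^sup>2 \<le> 4 * (g (P n) - m) + 4 * (g (P k) - m)" for n k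
    using mid[OF P(1) P(1), of n k] m_le[OF convex_midpoint_mem[OF K(1) P(1)[of n] P(1)[of k]]]
    by (simp add: dist_norm)
  moreover have "(\<lambda>n. 4 * (g (P n) - m)) \<longlonglongrightarrow> 0"
    by (rule tendsto_mult_right_zero[OF LIM_zero[OF gP]])
  ultimately have "Cauchy P" by (rule Cauchy_if_dist_sq_le)
  then obtain p where "P \<longlonglongrightarrow> p" using convergent_eq_Cauchy by blast
  then show thesis using that P(1) gP m_le by blast
qed

lemma half_sq_norm_midpoint:
  fixes p q :: "'a::real_inner"
  shows "(norm (midpoint p q))\<^sup>2 / 2 + (norm (p - q))\<^sup>2 / 8 = ((norm p)\<^sup>2 / 2 + (norm q)\<^sup>2 / 2) / 2"
  unfolding midpoint_def power2_norm_eq_inner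
  by (simp add: inner_add_left inner_add_right inner_diff_left inner_diff_right inner_commute
      algebra_simps) (simp add: field_simps)

lemma half_sq_norm_segment:
  fixes p z :: "'a::real_inner"
  shows "(norm ((1 - t) *\<^sub>R p + t *\<^sub>R z))\<^sup>2 / 2
    = (norm p)\<^sup>2 / 2 + t * inner p (z - p) + t\<^sup>2 * (norm (z - p))\<^sup>2 / 2"
proof -
  have "(1 - t) *\<^sub>R p + t *\<^sub>R z = p + t *\<^sub>R (z - p)" by (simp add: algebra_simps)
  moreover have "(norm (p + t *\<^sub>R d))\<^sup>2 = (norm p)\<^sup>2 + 2 * t * inner p d + t\<^sup>2 * (norm d)\<^sup>2"
    for d :: 'a
    unfolding power2_norm_eq_inner
    by (simp add: inner_add_left inner_add_right inner_commute algebra_simps power2_eq_square)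
  ultimately show ?thesis by simp
qed

lemma min_half_sq_norm_variational:
  fixes F :: "'a::real_inner \<Rightarrow> real"
  assumes F: "convex_on K F" and p: "p \<in> K" and z: "z \<in> K"
    and min: "\<And>q. q \<in> K \<Longrightarrow> F p + (norm p)\<^sup>2 / 2 \<le> F q + (norm q)\<^sup>2 / 2"
  shows "F p \<le> F z + inner p (z - p)"
proof -
  have "0 \<le> (F z - F p + inner p (z - p)) + t * ((norm (z - p))\<^sup>2 / 2)" if t: "0 < t" "t \<le> 1" for t
  proof -
    have "(1 - t) *\<^sub>R p + t *\<^sub>R z \<in> K"
      using F p z t unfolding convex_on_def by (auto intro: convexD)
    from min[OF this] convex_onD[OF F _ _ p z, of t] t
    have "0 \<le> t * (F z - F p + inner p (z - p)) + t\<^sup>2 * (norm (z - p))\<^sup>2 / 2"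
      unfolding half_sq_norm_segment by (simp add: algebra_simps)
    then have "0 \<le> t * ((F z - F p + inner p (z - p)) + t * ((norm (z - p))\<^sup>2 / 2))"
      by (simp add: algebra_simps power2_eq_square)
    then show ?thesis using t by (simp add: zero_le_mult_iff)
  qed
  from nonneg_if_nonneg_perturbations[OF this] show ?thesis by simp
qed

lemma closed_convex_has_min_norm:
  fixes S :: "'a::{real_inner,complete_space} set"
  assumes S: "closed S" "convex S" "S \<noteq> {}"
  shows "\<exists>p\<in>S. \<forall>s\<in>S. norm p \<le> norm s"
proof -
  define g where "g p = (norm p)\<^sup>2 / 2" for p :: 'a
  have mid: "g (midpoint p q) + (norm (p - q))\<^sup>2 / 8 \<le> (g p + g q) / 2" for p q
    using half_sq_norm_midpoint[of p q] by (simp add: g_def)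
  obtain P p m where P: "\<And>n. P n \<in> S" "P \<longlonglongrightarrow> p" "(\<lambda>n. g (P n)) \<longlonglongrightarrow> m"
    and m: "\<And>q. q \<in> S \<Longrightarrow> m \<le> g q"
    using strongly_convex_minimizing_sequence[OF S(2,3) _ mid, of 0] by (auto simp: g_def)
  have "p \<in> S" by (rule closed_sequentially[OF S(1) P(1,2)])
  have "(\<lambda>n. g (P n)) \<longlonglongrightarrow> g p"
    unfolding g_def by (intro tendsto_divide tendsto_power tendsto_norm P(2) tendsto_const) simp
  then have "g p = m" using P(3) by (rule LIMSEQ_unique)
  have "norm p \<le> norm s" if "s \<in> S" for s
  proof (rule power2_le_imp_le)
    show "(norm p)\<^sup>2 \<le> (norm s)\<^sup>2" using m[OF that] \<open>g p = m\<close> by (simp add: g_def)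
  qed simp
  with \<open>p \<in> S\<close> show ?thesis by blast
qed

lemma proj_zero_min_norm:
  fixes S :: "'a::{real_inner,complete_space} set"
  assumes "closed S" "convex S" "S \<noteq> {}"
  shows "proj S 0 \<in> S \<and> (\<forall>s\<in>S. norm (proj S 0) \<le> norm s)"
proof -
  have "\<exists>y. y \<in> S \<and> (\<forall>z\<in>S. dist 0 y \<le> dist 0 z)"
    using closed_convex_has_min_norm[OF assms] by auto
  then have "proj S 0 \<in> S \<and> (\<forall>z\<in>S. dist 0 (proj S 0) \<le> dist 0 z)"
    unfolding proj_def by (rule someI_ex)
  then show ?thesis by simp
qed

lemma proj_zero_obtuse:
  fixes S :: "'a::{real_inner,complete_space} set"
  assumes S: "closed S" "convex S" and s: "s \<in> S"
  shows "0 \<le> inner (s - proj S 0) (proj S 0)"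
proof -
  have p: "proj S 0 \<in> S" and min: "\<And>q. q \<in> S \<Longrightarrow> norm (proj S 0) \<le> norm q"
    using proj_zero_min_norm[OF S] s by auto
  have "0 \<le> 0 + inner (proj S 0) (s - proj S 0)"
  proof (rule min_half_sq_norm_variational[where F = "\<lambda>_. 0", OF _ p s])
    show "convex_on S (\<lambda>_. 0)" using S(2) by (simp add: convex_on_const)
    fix q assume "q \<in> S"
    then show "0 + (norm (proj S 0))\<^sup>2 / 2 \<le> 0 + (norm q)\<^sup>2 / 2"
      using power_mono[OF min norm_ge_zero, of q 2] by simp
  qed
  then show ?thesis by (simp add: inner_commute)
qed

lemma norm_sq_ge_if_obtuse:
  fixes u w :: "'a::real_inner"
  assumes "0 \<le> inner (w - u) u"
  shows "(norm (w - u))\<^sup>2 + (norm u)\<^sup>2 \<le> (norm w)\<^sup>2"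
proof -
  have "(norm w)\<^sup>2 = (norm (w - u))\<^sup>2 + 2 * inner (w - u) u + (norm u)\<^sup>2"
    unfolding power2_norm_eq_inner
    by (simp add: inner_diff_left inner_diff_right inner_commute)
  then show ?thesis using assms by linarith
qed

lemma proj_zero_eqI:
  assumes u: "u \<in> S" and obtuse: "\<And>w. w \<in> S \<Longrightarrow> 0 \<le> inner (w - u) u"
  shows "proj S 0 = u"
proof -
  have "norm u \<le> norm w" if "w \<in> S" for w
  proof (rule power2_le_imp_le)
    show "(norm u)\<^sup>2 \<le> (norm w)\<^sup>2"
      using norm_sq_ge_if_obtuse[OF obtuse[OF that]] zero_le_power2[of "norm (w - u)"] by linarith
  qed simp
  then have "\<exists>y. y \<in> S \<and> (\<forall>z\<in>S. dist 0 y \<le> dist 0 z)"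
    using u by auto
  then have "proj S 0 \<in> S \<and> (\<forall>z\<in>S. dist 0 (proj S 0) \<le> dist 0 z)"
    unfolding proj_def by (rule someI_ex)
  then have p: "proj S 0 \<in> S" "norm (proj S 0) \<le> norm u"
    using u by auto
  have "(norm (proj S 0))\<^sup>2 \<le> (norm u)\<^sup>2" using power_mono[OF p(2) norm_ge_zero] .
  then have "(norm (proj S 0 - u))\<^sup>2 \<le> 0"
    using norm_sq_ge_if_obtuse[OF obtuse[OF p(1)]] by linarith
  then show ?thesis by simp
qed

section \<open>Minty's theorem\<close>

text \<open>The Fitzpatrick function \<open>F\<^sub>A(x, u) = sup {\<langle>x, w\<rangle> + \<langle>y, u\<rangle> - \<langle>y, w\<rangle> | w \<in> A y}\<close> is
  real-valued here, so it is paired with the set \<open>fitzpatrick_dom A\<close> where the supremum is finite.\<close>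

definition fitzpatrick_dom :: "('a::real_inner \<Rightarrow> 'a set) \<Rightarrow> ('a \<times> 'a) set" where
  "fitzpatrick_dom A = {p. bdd_above ((\<lambda>(y, w). inner p (w, y) - inner y w) ` op_graph A)}"

definition fitzpatrick :: "('a::real_inner \<Rightarrow> 'a set) \<Rightarrow> 'a \<times> 'a \<Rightarrow> real" where
  "fitzpatrick A p = (SUP (y, w)\<in>op_graph A. inner p (w, y) - inner y w)"

lemma fitzpatrick_term: "inner (x, u) (w, y) - inner y w = inner x u - inner (x - y) (u - w)"
  by (simp add: inner_diff_left inner_diff_right inner_commute)

lemma fitzpatrick_upper:
  assumes "p \<in> fitzpatrick_dom A" "w \<in> A y"
  shows "inner p (w, y) - inner y w \<le> fitzpatrick A p"
  using assms cSUP_upper[of "(y, w)" "op_graph A" "\<lambda>(y, w). inner p (w, y) - inner y w"]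
  by (simp add: fitzpatrick_def fitzpatrick_dom_def op_graph_def)

lemma fitzpatrick_least:
  assumes "op_graph A \<noteq> {}" "\<And>y w. w \<in> A y \<Longrightarrow> inner p (w, y) - inner y w \<le> c"
  shows "p \<in> fitzpatrick_dom A" "fitzpatrick A p \<le> c"
  using assms unfolding fitzpatrick_def fitzpatrick_dom_def op_graph_def
  by (auto intro!: cSUP_least bdd_aboveI2[where M = c])

lemma fitzpatrick_graph:
  assumes "monotone_op A" "u \<in> A x"
  shows "(x, u) \<in> fitzpatrick_dom A" "fitzpatrick A (x, u) = inner x u"
proof -
  have "op_graph A \<noteq> {}" using assms(2) by (auto simp: op_graph_def)
  moreover have "inner (x, u) (w, y) - inner y w \<le> inner x u" if "w \<in> A y" for y w
    using assms that unfolding fitzpatrick_term monotone_op_def by simp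
  ultimately have dom: "(x, u) \<in> fitzpatrick_dom A" and "fitzpatrick A (x, u) \<le> inner x u"
    using fitzpatrick_least by blast+
  moreover have "inner x u \<le> fitzpatrick A (x, u)"
    using fitzpatrick_upper[OF dom assms(2), unfolded fitzpatrick_term] by simp
  ultimately show "(x, u) \<in> fitzpatrick_dom A" "fitzpatrick A (x, u) = inner x u" by simp_all
qed

lemma inner_le_fitzpatrick:
  assumes max: "maximal_monotone A" and dom: "(x, u) \<in> fitzpatrick_dom A"
  shows "inner x u \<le> fitzpatrick A (x, u)"
proof (rule ccontr)
  assume less: "\<not> inner x u \<le> fitzpatrick A (x, u)"
  have "u \<in> A x"
  proof (rule maximal_monotone_memI[OF max])
    fix y w assume "w \<in> A y"
    from fitzpatrick_upper[OF dom this, unfolded fitzpatrick_term] less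
    show "0 \<le> inner (x - y) (u - w)" by simp
  qed
  then have "fitzpatrick A (x, u) = inner x u"
    using max by (simp add: fitzpatrick_graph maximal_monotone_def)
  with less show False by simp
qed

lemma convex_on_fitzpatrick:
  assumes "op_graph A \<noteq> {}"
  shows "convex_on (fitzpatrick_dom A) (fitzpatrick A)"
proof -
  have comb: "(1 - t) *\<^sub>R p + t *\<^sub>R q \<in> fitzpatrick_dom A \<and>
      fitzpatrick A ((1 - t) *\<^sub>R p + t *\<^sub>R q) \<le> (1 - t) * fitzpatrick A p + t * fitzpatrick A q"
    if p: "p \<in> fitzpatrick_dom A" and q: "q \<in> fitzpatrick_dom A" and t: "0 \<le> t" "t \<le> 1"
    for p q t
  proof -
    have "inner ((1 - t) *\<^sub>R p + t *\<^sub>R q) (w, y) - inner y w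
        \<le> (1 - t) * fitzpatrick A p + t * fitzpatrick A q" if "w \<in> A y" for y w
    proof -
      have "inner ((1 - t) *\<^sub>R p + t *\<^sub>R q) (w, y) - inner y w
          = (1 - t) * (inner p (w, y) - inner y w) + t * (inner q (w, y) - inner y w)"
        by (simp add: inner_add_left algebra_simps)
      also have "\<dots> \<le> (1 - t) * fitzpatrick A p + t * fitzpatrick A q"
        using fitzpatrick_upper[OF p that] fitzpatrick_upper[OF q that] t
        by (intro add_mono mult_left_mono) auto
      finally show ?thesis .
    qed
    then show ?thesis using fitzpatrick_least[OF assms] by blast
  qed
  show ?thesis
  proof (rule convex_onI)
    show "convex (fitzpatrick_dom A)" unfolding convex_alt using comb by blast
  qed (use comb in simp)
qed

lemma fitzpatrick_lsc:
  assumes G: "op_graph A \<noteq> {}" and P: "\<And>n. P n \<in> fitzpatrick_dom A" "P \<longlonglongrightarrow> p"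
    and l: "(\<lambda>n. fitzpatrick A (P n)) \<longlonglongrightarrow> l"
  shows "p \<in> fitzpatrick_dom A \<and> fitzpatrick A p \<le> l"
proof -
  have "inner p (w, y) - inner y w \<le> l" if "w \<in> A y" for y w
  proof (rule LIMSEQ_le[OF _ l])
    show "(\<lambda>n. inner (P n) (w, y) - inner y w) \<longlonglongrightarrow> inner p (w, y) - inner y w"
      by (intro tendsto_intros P(2))
    show "\<exists>N. \<forall>n\<ge>N. inner (P n) (w, y) - inner y w \<le> fitzpatrick A (P n)"
      using fitzpatrick_upper[OF P(1) that] by blast
  qed
  then show ?thesis using fitzpatrick_least[OF G] by blast
qed

lemma fitzpatrick_half_sq_norm_nonneg:
  assumes max: "maximal_monotone A" and q: "q \<in> fitzpatrick_dom A"
  shows "0 \<le> fitzpatrick A q + (norm q)\<^sup>2 / 2"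
proof -
  obtain x u where xu: "q = (x, u)" by fastforce
  have "inner x u + (norm q)\<^sup>2 / 2 = (norm (x + u))\<^sup>2 / 2"
    unfolding xu power2_norm_eq_inner by (simp add: inner_add_left inner_add_right inner_commute)
  moreover have "inner x u \<le> fitzpatrick A q"
    using inner_le_fitzpatrick[OF max] q by (simp add: xu)
  ultimately show ?thesis using zero_le_power2[of "norm (x + u)"] by linarith
qed

lemma fitzpatrick_half_sq_norm_has_min:
  fixes A :: "'a::{real_inner,complete_space} \<Rightarrow> 'a set"
  assumes max: "maximal_monotone A"
  shows "\<exists>p\<in>fitzpatrick_dom A. \<forall>q\<in>fitzpatrick_dom A.
    fitzpatrick A p + (norm p)\<^sup>2 / 2 \<le> fitzpatrick A q + (norm q)\<^sup>2 / 2"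
proof -
  define K where "K = fitzpatrick_dom A"
  define g where "g q = fitzpatrick A q + (norm q)\<^sup>2 / 2" for q
  have G: "op_graph A \<noteq> {}" by (rule maximal_monotone_graph_nonempty[OF max])
  have F: "convex_on K (fitzpatrick A)" unfolding K_def by (rule convex_on_fitzpatrick[OF G])
  have "K \<noteq> {}"
    using G fitzpatrick_graph max by (fastforce simp: K_def op_graph_def maximal_monotone_def)
  moreover have "0 \<le> g q" if "q \<in> K" for q
    using fitzpatrick_half_sq_norm_nonneg[OF max] that by (auto simp: K_def g_def)
  moreover have "g (midpoint p q) + (norm (p - q))\<^sup>2 / 8 \<le> (g p + g q) / 2"
    if "p \<in> K" "q \<in> K" for p q
  proof -
    have "midpoint p q = (1 - 1/2) *\<^sub>R p + (1/2) *\<^sub>R q"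
      by (simp add: midpoint_def scaleR_add_right)
    then have "fitzpatrick A (midpoint p q) \<le> (fitzpatrick A p + fitzpatrick A q) / 2"
      using convex_onD[OF F, of "1/2" p q] that by simp
    then show ?thesis using half_sq_norm_midpoint[of p q] by (simp add: g_def)
  qed
  ultimately obtain P p m where P: "\<And>n. P n \<in> K" "P \<longlonglongrightarrow> p" "(\<lambda>n. g (P n)) \<longlonglongrightarrow> m"
    and m: "\<And>q. q \<in> K \<Longrightarrow> m \<le> g q"
    using strongly_convex_minimizing_sequence[of K 0 g] F unfolding convex_on_def by blast
  have "(\<lambda>n. g (P n) - (norm (P n))\<^sup>2 / 2) \<longlonglongrightarrow> m - (norm p)\<^sup>2 / 2"
    by (intro tendsto_intros P(2,3)) simp
  then have "p \<in> K \<and> fitzpatrick A p \<le> m - (norm p)\<^sup>2 / 2"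
    using fitzpatrick_lsc[OF G P(1,2)[unfolded K_def]] by (simp add: g_def K_def)
  then have "p \<in> K" "\<forall>q\<in>K. g p \<le> g q" using m by (force simp: g_def)+
  then show ?thesis unfolding K_def g_def by blast
qed

text \<open>The minimiser \<open>(x, u)\<close> of \<open>F\<^sub>A + \<parallel>\<cdot>\<parallel>\<^sup>2/2\<close> satisfies
  \<open>\<parallel>x + u\<parallel>\<^sup>2 \<le> \<langle>y + u, w + x\<rangle>\<close> on the graph, hence \<open>-x \<in> A (-u)\<close>, and then \<open>u = -x\<close>.\<close>

lemma minty_zero:
  fixes A :: "'a::{real_inner,complete_space} \<Rightarrow> 'a set"
  assumes max: "maximal_monotone A"
  shows "\<exists>x. - x \<in> A x"
proof -
  have G: "op_graph A \<noteq> {}" by (rule maximal_monotone_graph_nonempty[OF max])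
  obtain x u where p: "(x, u) \<in> fitzpatrick_dom A" and min: "\<And>q. q \<in> fitzpatrick_dom A \<Longrightarrow>
      fitzpatrick A (x, u) + (norm (x, u))\<^sup>2 / 2 \<le> fitzpatrick A q + (norm q)\<^sup>2 / 2"
    using fitzpatrick_half_sq_norm_has_min[OF max] by auto
  have key: "(norm (x + u))\<^sup>2 \<le> inner (y + u) (w + x)" if "w \<in> A y" for y w
  proof -
    have y: "(y, w) \<in> fitzpatrick_dom A" "fitzpatrick A (y, w) = inner y w"
      using fitzpatrick_graph that max by (auto simp: maximal_monotone_def)
    have "fitzpatrick A (x, u) \<le> inner y w + inner (x, u) ((y, w) - (x, u))"
      using min_half_sq_norm_variational[OF convex_on_fitzpatrick[OF G] p y(1) min] y(2) by simp
    moreover have "inner x u \<le> fitzpatrick A (x, u)" by (rule inner_le_fitzpatrick[OF max p])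
    ultimately show ?thesis
      unfolding power2_norm_eq_inner
      by (simp add: inner_add_left inner_add_right inner_diff_right inner_commute)
  qed
  have "- x \<in> A (- u)"
  proof (rule maximal_monotone_memI[OF max])
    fix y w assume "w \<in> A y"
    from key[OF this] have "0 \<le> inner (y + u) (w + x)"
      using zero_le_power2 order_trans by blast
    then show "0 \<le> inner (- u - y) (- x - w)"
      by (metis inner_minus_left inner_minus_right minus_diff_eq minus_minus diff_minus_eq_add
          add.commute)
  qed
  with key[OF this] have "u = - x" by (simp add: add_eq_0_iff2)
  with \<open>- x \<in> A (- u)\<close> show ?thesis by auto
qed

lemma minty_surjective:
  fixes A :: "'a::{real_inner,complete_space} \<Rightarrow> 'a set"
  assumes "maximal_monotone A" "l > 0"
  shows "\<exists>p. \<exists>a\<in>A p. z = p + l *\<^sub>R a"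
proof -
  obtain x a where "a \<in> A x" "- x = l *\<^sub>R a - z"
    using minty_zero[OF maximal_monotone_scale_shift[OF assms, of z]] by blast
  then show ?thesis by (auto simp: algebra_simps)
qed

section \<open>Convexity of the closures of domain and range\<close>

lemma mem_closure_if_norm_bound:
  fixes x :: "'a::real_normed_vector"
  assumes near: "\<And>n. \<exists>p\<in>S. norm (x - p) \<le> e n" and e: "e \<longlonglongrightarrow> 0"
  shows "x \<in> closure S"
proof -
  obtain P where P: "\<And>n. P n \<in> S" "\<And>n. norm (x - P n) \<le> e n" using near by metis
  have "(\<lambda>n. x - P n) \<longlonglongrightarrow> 0" using P(2) by (intro Lim_null_comparison[OF _ e]) simp
  then have "(\<lambda>n. x - (x - P n)) \<longlonglongrightarrow> x - 0" by (intro tendsto_intros)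
  then show ?thesis using P(1) unfolding closure_sequential by auto
qed

lemma sq_le_imp_le_plus_sqrt:
  fixes e a b :: real
  assumes "e\<^sup>2 \<le> a * e + b" "0 \<le> a" "0 \<le> b"
  shows "e \<le> a + sqrt b"
proof (rule ccontr)
  assume "\<not> e \<le> a + sqrt b"
  then have e: "a + sqrt b < e" "sqrt b < e" "0 < e"
    using assms(2) real_sqrt_ge_zero[OF assms(3)] by linarith+
  then have "e * (a + sqrt b) < e * e" by (intro mult_strict_left_mono) auto
  moreover have "sqrt b * sqrt b \<le> e * sqrt b" using e(2) assms(3) by (intro mult_right_mono) auto
  ultimately show False using assms(1,3) by (simp add: power2_eq_square algebra_simps)
qed

lemma convex_closure_if_segments:
  fixes S :: "'a::real_normed_vector set"
  assumes "\<And>x y t. x \<in> S \<Longrightarrow> y \<in> S \<Longrightarrow> 0 \<le> t \<Longrightarrow> t \<le> 1 \<Longrightarrow>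
    (1 - t) *\<^sub>R x + t *\<^sub>R y \<in> closure S"
  shows "convex (closure S)"
  unfolding convex_alt
proof (intro ballI allI impI)
  fix x y and t :: real assume xy: "x \<in> closure S" "y \<in> closure S" and t: "0 \<le> t \<and> t \<le> 1"
  let ?f = "\<lambda>p. (1 - t) *\<^sub>R fst p + t *\<^sub>R snd p"
  have "?f ` closure (S \<times> S) \<subseteq> closure S"
    by (rule image_closure_subset) (use assms t in \<open>auto intro!: continuous_intros\<close>)
  then show "(1 - t) *\<^sub>R x + t *\<^sub>R y \<in> closure S" using xy by (force simp: closure_Times)
qed

lemma bounded_linear_image_closure_Times_subset:
  assumes "bounded_linear f"
  shows "f ` (closure S \<times> closure T) \<subseteq> closure (f ` (S \<times> T))"
  unfolding closure_Times[symmetric]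
  by (rule image_closure_subset) (auto intro: linear_continuous_on assms closure_subset[THEN subsetD])

lemma convex_closure_bounded_linear_image_Times:
  assumes f: "bounded_linear f" and S: "convex (closure S)" and T: "convex (closure T)"
  shows "convex (closure (f ` (S \<times> T)))"
proof -
  have "closure (f ` (S \<times> T)) = closure (f ` (closure S \<times> closure T))"
  proof (rule subset_antisym)
    show "closure (f ` (S \<times> T)) \<subseteq> closure (f ` (closure S \<times> closure T))"
      by (intro closure_mono image_mono Sigma_mono closure_subset)
    show "closure (f ` (closure S \<times> closure T)) \<subseteq> closure (f ` (S \<times> T))"
      by (rule closure_minimal[OF bounded_linear_image_closure_Times_subset[OF f] closed_closure])
  qed
  moreover have "convex (f ` (closure S \<times> closure T))"
    using S T f by (intro convex_linear_image convex_Times) (auto dest: bounded_linear.linear)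
  ultimately show ?thesis by simp
qed

lemma resolvent_monotone_bound:
  assumes max: "maximal_monotone A" and pa: "a \<in> A p" "x = p + l *\<^sub>R a" and l: "0 \<le> l"
    and u: "u \<in> A y"
  shows "- l * ((norm (x - p) + norm (x - y)) * norm u) \<le> inner (p - y) (x - p)"
proof -
  have "0 \<le> l * inner (p - y) (a - u)" using maximal_monotoneD[OF max pa(1) u] l by simp
  then have "l * inner (p - y) u \<le> inner (p - y) (x - p)"
    using pa(2) by (simp add: inner_diff_right algebra_simps)
  moreover have "- (norm (p - y) * norm u) \<le> inner (p - y) u"
    using Cauchy_Schwarz_ineq2[of "p - y" u] by linarith
  moreover have "norm (p - y) \<le> norm (x - p) + norm (x - y)"
    using norm_triangle_ineq[of "p - x" "x - y"] by (simp add: norm_minus_commute)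
  then have "norm (p - y) * norm u \<le> (norm (x - p) + norm (x - y)) * norm u"
    by (rule mult_right_mono) simp
  ultimately have "l * - ((norm (x - p) + norm (x - y)) * norm u) \<le> inner (p - y) (x - p)"
    using mult_left_mono[OF _ l, of "- ((norm (x - p) + norm (x - y)) * norm u)" "inner (p - y) u"]
    by linarith
  then show ?thesis by simp
qed

lemma resolvent_segment_sq_bound:
  assumes max: "maximal_monotone A" and u: "u1 \<in> A y1" "u2 \<in> A y2" and \<theta>: "0 \<le> \<theta>" "\<theta> \<le> 1"
    and pa: "a \<in> A p" "x = p + l *\<^sub>R a" and l: "0 \<le> l" and x: "x = (1 - \<theta>) *\<^sub>R y1 + \<theta> *\<^sub>R y2"
  defines "e \<equiv> norm (x - p)" and "M \<equiv> norm (x - y1) + norm (x - y2)" and "K \<equiv> norm u1 + norm u2"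
  shows "e\<^sup>2 \<le> l * K * e + l * (M * K)"
proof -
  define X1 where "X1 = (e + norm (x - y1)) * norm u1"
  define X2 where "X2 = (e + norm (x - y2)) * norm u2"
  have "(1 - \<theta>) *\<^sub>R (p - y1) + \<theta> *\<^sub>R (p - y2) = - (x - p)" by (simp add: x algebra_simps)
  then have "(1 - \<theta>) * inner (p - y1) (x - p) + \<theta> * inner (p - y2) (x - p) = - e\<^sup>2"
    by (metis e_def inner_add_left inner_minus_left inner_scaleR_left power2_norm_eq_inner)
  moreover have "- l * X1 \<le> inner (p - y1) (x - p)" "- l * X2 \<le> inner (p - y2) (x - p)"
    using resolvent_monotone_bound[OF max pa l u(1)] resolvent_monotone_bound[OF max pa l u(2)]
    by (simp_all add: X1_def X2_def e_def)
  then have "(1 - \<theta>) * (- l * X1) \<le> (1 - \<theta>) * inner (p - y1) (x - p)"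
    "\<theta> * (- l * X2) \<le> \<theta> * inner (p - y2) (x - p)"
    using \<theta> by (intro mult_left_mono; simp)+
  moreover have "(1 - \<theta>) * (- l * X1) + \<theta> * (- l * X2) = - (l * ((1 - \<theta>) * X1 + \<theta> * X2))"
    by (simp add: algebra_simps)
  ultimately have "e\<^sup>2 \<le> l * ((1 - \<theta>) * X1 + \<theta> * X2)" by linarith
  also have "\<dots> \<le> l * ((e + M) * K)"
  proof (rule mult_left_mono[OF _ l])
    have "(1 - \<theta>) * X1 \<le> X1" "\<theta> * X2 \<le> X2"
      using \<theta> by (auto intro!: mult_left_le_one_le simp: X1_def X2_def e_def)
    moreover have "X1 \<le> (e + M) * norm u1" "X2 \<le> (e + M) * norm u2"
      by (auto intro!: mult_right_mono simp: X1_def X2_def M_def)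
    ultimately show "(1 - \<theta>) * X1 + \<theta> * X2 \<le> (e + M) * K"
      unfolding K_def distrib_left by linarith
  qed
  finally show ?thesis by (simp add: algebra_simps)
qed

lemma convex_closure_dom:
  fixes A :: "'a::{real_inner,complete_space} \<Rightarrow> 'a set"
  assumes max: "maximal_monotone A"
  shows "convex (closure (op_dom A))"
proof (rule convex_closure_if_segments)
  fix y1 y2 and \<theta> :: real assume "y1 \<in> op_dom A" "y2 \<in> op_dom A" and \<theta>: "0 \<le> \<theta>" "\<theta> \<le> 1"
  then obtain u1 u2 where u: "u1 \<in> A y1" "u2 \<in> A y2" by (auto simp: op_dom_def)
  define x where "x = (1 - \<theta>) *\<^sub>R y1 + \<theta> *\<^sub>R y2"
  define M where "M = norm (x - y1) + norm (x - y2)"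
  define K where "K = norm u1 + norm u2"
  have near: "\<exists>p\<in>op_dom A. norm (x - p) \<le> l * K + sqrt (l * (M * K))" if l: "l > 0" for l
  proof -
    obtain p a where pa: "a \<in> A p" "x = p + l *\<^sub>R a" using minty_surjective[OF max l] by blast
    have "(norm (x - p))\<^sup>2 \<le> l * K * norm (x - p) + l * (M * K)"
      using resolvent_segment_sq_bound[OF max u \<theta> pa _ x_def] l by (simp add: M_def K_def)
    then have "norm (x - p) \<le> l * K + sqrt (l * (M * K))"
      by (rule sq_le_imp_le_plus_sqrt) (use l in \<open>auto simp: M_def K_def\<close>)
    moreover have "p \<in> op_dom A" using pa(1) by (auto simp: op_dom_def)
    ultimately show ?thesis by blast
  qed
  have "(\<lambda>n. 1 / real (Suc n) * K + sqrt (1 / real (Suc n) * (M * K)))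
      \<longlonglongrightarrow> 0 * K + sqrt (0 * (M * K))"
    by (intro tendsto_intros LIMSEQ_Suc[OF lim_1_over_n])
  then have "(\<lambda>n. 1 / real (Suc n) * K + sqrt (1 / real (Suc n) * (M * K))) \<longlonglongrightarrow> 0"
    by simp
  moreover have "\<exists>p\<in>op_dom A. norm (x - p) \<le> 1 / real (Suc n) * K + sqrt (1 / real (Suc n) * (M * K))"
    for n by (rule near) simp
  ultimately show "(1 - \<theta>) *\<^sub>R y1 + \<theta> *\<^sub>R y2 \<in> closure (op_dom A)"
    unfolding x_def[symmetric] by (intro mem_closure_if_norm_bound)
qed

lemma convex_closure_ran:
  fixes A :: "'a::{real_inner,complete_space} \<Rightarrow> 'a set"
  assumes "maximal_monotone A"
  shows "convex (closure (op_ran A))"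
proof -
  have "op_dom (\<lambda>u. {x. u \<in> A x}) = op_ran A" by (auto simp: op_dom_def op_ran_def)
  then show ?thesis using convex_closure_dom[OF maximal_monotone_converse[OF assms]] by simp
qed

text \<open>Minty gives \<open>y + b + t d = p + a\<close> with \<open>a \<in> B p\<close>; monotonicity yields \<open>\<parallel>p - y\<parallel>\<^sup>2 \<le> t \<delta>\<close>,
  so the convex combination \<open>(1 - 1/t) b + a/t = b + d + (y - p)/t\<close> tends to \<open>b + d\<close> as \<open>t \<rightarrow> \<infinity>\<close>.\<close>

lemma ran_add_mem_closure_ran_if_dom_bounded:
  fixes B :: "'a::{real_inner,complete_space} \<Rightarrow> 'a set"
  assumes max: "maximal_monotone B" and b: "b \<in> B y"
    and bd: "\<And>z. z \<in> op_dom B \<Longrightarrow> inner z d \<le> c"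
  shows "b + d \<in> closure (op_ran B)"
proof -
  define \<delta> where "\<delta> = c - inner y d"
  have \<delta>: "0 \<le> \<delta>" using bd[of y] b by (auto simp: \<delta>_def op_dom_def)
  have near: "\<exists>r\<in>closure (op_ran B). norm (b + d - r) \<le> sqrt (\<delta> / t)" if t: "t \<ge> 1" for t
  proof -
    obtain p a where pa: "a \<in> B p" "y + b + t *\<^sub>R d = p + 1 *\<^sub>R a"
      using minty_surjective[OF max zero_less_one] by blast
    have a_eq: "a = b + (y - p) + t *\<^sub>R d" using pa(2) by (simp add: algebra_simps)
    have "0 \<le> inner (p - y) (a - b)" by (rule maximal_monotoneD[OF max pa(1) b])
    also have "a - b = (y - p) + t *\<^sub>R d" unfolding a_eq by simp
    finally have "(norm (p - y))\<^sup>2 \<le> t * (inner p d - inner y d)"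
      by (simp add: power2_norm_eq_inner inner_add_right inner_diff_left inner_diff_right
          inner_commute algebra_simps)
    also have "\<dots> \<le> t * \<delta>"
      using bd[of p] pa(1) t by (intro mult_left_mono) (auto simp: \<delta>_def op_dom_def)
    finally have "(norm (y - p) / t)\<^sup>2 \<le> \<delta> / t"
      using t by (simp add: norm_minus_commute power_divide power2_eq_square field_simps)
    then have "norm (y - p) / t \<le> sqrt (\<delta> / t)" by (simp add: real_le_rsqrt)
    moreover have "a \<in> closure (op_ran B)" "b \<in> closure (op_ran B)"
      using pa(1) b by (auto intro!: closure_subset[THEN subsetD] simp: op_ran_def)
    then have "(1 - 1/t) *\<^sub>R b + (1/t) *\<^sub>R a \<in> closure (op_ran B)"
      using convex_closure_ran[OF max] t by (intro convexD_alt) auto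
    moreover have "(1 - 1/t) *\<^sub>R b + (1/t) *\<^sub>R a = b + d + (1/t) *\<^sub>R (y - p)"
      unfolding a_eq using t by (simp add: algebra_simps)
    ultimately show ?thesis using t by (intro bexI) (auto simp: norm_divide)
  qed
  have "\<exists>r\<in>closure (op_ran B). norm (b + d - r) \<le> sqrt (\<delta> / real (Suc n))" for n
    by (rule near) simp
  moreover have "(\<lambda>n. sqrt (\<delta> / real (Suc n))) \<longlonglongrightarrow> sqrt 0"
    by (intro tendsto_intros LIMSEQ_Suc[OF lim_const_over_n])
  ultimately have "b + d \<in> closure (closure (op_ran B))"
    by (intro mem_closure_if_norm_bound) simp_all
  then show ?thesis by simp
qed

section \<open>The minimal norm elements of \<open>closure D\<close> and \<open>closure R\<close>\<close>

locale maximal_monotone_pair =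
  fixes A B :: "'a::{real_inner,complete_space} \<Rightarrow> 'a set" and D R :: "'a set" and vD vR :: 'a
  assumes max_A: "maximal_monotone A" and max_B: "maximal_monotone B"
    and D_eq: "D = {a - b | a b. a \<in> op_dom A \<and> b \<in> op_dom B}"
    and R_eq: "R = {a + b | a b. a \<in> op_ran A \<and> b \<in> op_ran B}"
    and vD_eq: "vD = proj (closure D) 0"
    and vR_eq: "vR = proj (closure R) 0"
begin

lemma diff_mem_D: "a \<in> A x \<Longrightarrow> b \<in> B y \<Longrightarrow> x - y \<in> D"
  unfolding D_eq op_dom_def by blast

lemma add_mem_R: "a \<in> A x \<Longrightarrow> b \<in> B y \<Longrightarrow> a + b \<in> R"
  unfolding R_eq op_ran_def by blast

lemma graph_A_nonempty: obtains x a where "a \<in> A x"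
  using maximal_monotone_graph_nonempty[OF max_A] by (auto simp: op_graph_def)

lemma graph_B_nonempty: obtains y b where "b \<in> B y"
  using maximal_monotone_graph_nonempty[OF max_B] by (auto simp: op_graph_def)

lemma convex_closure_D: "convex (closure D)"
proof -
  have "D = (\<lambda>p. fst p - snd p) ` (op_dom A \<times> op_dom B)" by (force simp: D_eq)
  then show ?thesis
    using convex_closure_bounded_linear_image_Times[OF _ convex_closure_dom[OF max_A]
        convex_closure_dom[OF max_B]] bounded_linear_sub[OF bounded_linear_fst bounded_linear_snd]
    by simp
qed

lemma convex_closure_R: "convex (closure R)"
proof -
  have "R = (\<lambda>p. fst p + snd p) ` (op_ran A \<times> op_ran B)" by (force simp: R_eq)
  then show ?thesis
    using convex_closure_bounded_linear_image_Times[OF _ convex_closure_ran[OF max_A]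
        convex_closure_ran[OF max_B]] bounded_linear_add[OF bounded_linear_fst bounded_linear_snd]
    by simp
qed

lemma D_R_nonempty: "D \<noteq> {}" "R \<noteq> {}"
proof -
  obtain x a y b where "a \<in> A x" "b \<in> B y" by (meson graph_A_nonempty graph_B_nonempty)
  then show "D \<noteq> {}" "R \<noteq> {}" using diff_mem_D add_mem_R by blast+
qed

lemma vD_mem: "vD \<in> closure D"
  using proj_zero_min_norm[OF closed_closure convex_closure_D] D_R_nonempty by (simp add: vD_eq)

lemma vR_mem: "vR \<in> closure R"
  using proj_zero_min_norm[OF closed_closure convex_closure_R] D_R_nonempty by (simp add: vR_eq)

lemma vD_obtuse: "s \<in> closure D \<Longrightarrow> 0 \<le> inner (s - vD) vD"
  unfolding vD_eq by (rule proj_zero_obtuse[OF closed_closure convex_closure_D])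

lemma vR_obtuse: "s \<in> closure R \<Longrightarrow> 0 \<le> inner (s - vR) vR"
  unfolding vR_eq by (rule proj_zero_obtuse[OF closed_closure convex_closure_R])

lemma A_shift_vD:
  assumes a: "a \<in> A x" and b: "b \<in> B (x - vD)"
  shows "a - vD \<in> A x"
proof -
  have "inner y (- vD) \<le> inner x (- vD)" if y: "y \<in> op_dom A" for y
  proof -
    obtain w where "w \<in> A y" using y by (auto simp: op_dom_def)
    then have "y - (x - vD) \<in> closure D" using diff_mem_D[OF _ b] closure_subset by blast
    from vD_obtuse[OF this] show ?thesis by (simp add: inner_diff_left)
  qed
  from maximal_monotone_add_normal[OF max_A a this] show ?thesis by simp
qed

lemma Zt_point_orth_B_shift:
  assumes a: "a \<in> A x" and b: "b \<in> B (x - vD)" and ab: "a + b = vR"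
  shows "inner vD vR = 0" and "b + vD \<in> B (x - vD - vR)"
proof -
  have "inner w (- vR) \<le> inner b (- vR)" if w: "w \<in> op_ran B" for w
  proof -
    obtain y where "w \<in> B y" using w by (auto simp: op_ran_def)
    then have "a + w \<in> closure R" using add_mem_R[OF a] closure_subset by blast
    moreover have "a + w - vR = w - b" by (simp add: ab[symmetric])
    ultimately have "0 \<le> inner (w - b) vR" using vR_obtuse by metis
    then show ?thesis by (simp add: inner_diff_left)
  qed
  from maximal_monotone_shift_point[OF max_B b this]
  have b': "b \<in> B (x - vD - vR)" by simp
  have "x - (x - vD - vR) \<in> closure D" using diff_mem_D[OF a b'] closure_subset by blast
  from vD_obtuse[OF this] have "0 \<le> inner vR vD" by simp
  moreover have "a - vD + b \<in> closure R" using add_mem_R[OF A_shift_vD[OF a b] b] closure_subset by blast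
  from vR_obtuse[OF this] have "0 \<le> - inner vD vR" using ab by (simp add: algebra_simps)
  ultimately show orth: "inner vD vR = 0" by (simp add: inner_commute)
  have "inner y vD \<le> inner (x - vD - vR) vD" if y: "y \<in> op_dom B" for y
  proof -
    obtain w where "w \<in> B y" using y by (auto simp: op_dom_def)
    then have "x - y \<in> closure D" using diff_mem_D[OF a] closure_subset by blast
    from vD_obtuse[OF this] orth show ?thesis by (simp add: inner_diff_left inner_diff_right inner_commute)
  qed
  from maximal_monotone_add_normal[OF max_B b' this] show "b + vD \<in> B (x - vD - vR)" .
qed

lemma proj_closure_D_inter_R:
  assumes "vD + vR \<in> closure (D \<inter> R)" and orth: "inner vD vR = 0"
  shows "proj (closure (D \<inter> R)) 0 = vD + vR"
proof (rule proj_zero_eqI[OF assms(1)])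
  fix w assume "w \<in> closure (D \<inter> R)"
  then have "w \<in> closure D" "w \<in> closure R" by (meson closure_mono inf_le1 inf_le2 subsetD)+
  moreover have "inner (w - (vD + vR)) (vD + vR) = inner (w - vD) vD + inner (w - vR) vR - 2 * inner vD vR"
    by (simp add: inner_diff_left inner_diff_right inner_add_left inner_add_right inner_commute)
  ultimately show "0 \<le> inner (w - (vD + vR)) (vD + vR)"
    using vD_obtuse vR_obtuse orth by fastforce
qed

lemma Zt_point_shift:
  assumes a: "a \<in> A x" and b: "b \<in> B (x - vD)" and ab: "a + b = vR"
  shows "proj (closure (D \<inter> R)) 0 = vD + vR" and "b + vD \<in> B (x - (vD + vR))"
proof -
  have orth: "inner vD vR = 0" and b': "b + vD \<in> B (x - vD - vR)"
    using Zt_point_orth_B_shift[OF a b ab] by blast+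
  then show "b + vD \<in> B (x - (vD + vR))" by (simp add: diff_diff_eq)
  have "x - (x - vD - vR) \<in> D" "a + (b + vD) \<in> R"
    using diff_mem_D[OF a b'] add_mem_R[OF a b'] by blast+
  then have "vD + vR \<in> closure (D \<inter> R)" using ab closure_subset by (force simp: algebra_simps)
  from proj_closure_D_inter_R[OF this orth] show "proj (closure (D \<inter> R)) 0 = vD + vR" .
qed

lemma closure_R_add_vD:
  assumes "r \<in> closure R"
  shows "r + vD \<in> closure R"
proof -
  obtain x0 a0 where a0: "a0 \<in> A x0" by (rule graph_A_nonempty)
  have bd: "inner y vD \<le> inner x0 vD - inner vD vD" if y: "y \<in> op_dom B" for y
  proof -
    obtain w where "w \<in> B y" using y by (auto simp: op_dom_def)
    then have "x0 - y \<in> closure D" using diff_mem_D[OF a0] closure_subset by blast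
    from vD_obtuse[OF this] show ?thesis by (simp add: inner_diff_left)
  qed
  have "r + vD \<in> closure R" if r: "r \<in> R" for r
  proof -
    obtain a b where r: "r = a + b" "a \<in> op_ran A" "b \<in> op_ran B" using r R_eq by blast
    then obtain y where "b \<in> B y" by (auto simp: op_ran_def)
    from ran_add_mem_closure_ran_if_dom_bounded[OF max_B this bd]
    have "(\<lambda>p. fst p + snd p) (a, b + vD) \<in> closure ((\<lambda>p. fst p + snd p) ` (op_ran A \<times> op_ran B))"
      using bounded_linear_image_closure_Times_subset[OF bounded_linear_add[OF bounded_linear_fst
          bounded_linear_snd]] r(2) closure_subset by blast
    moreover have "(\<lambda>p. fst p + snd p) ` (op_ran A \<times> op_ran B) = R" by (force simp: R_eq)
    ultimately show ?thesis using r(1) by (simp add: add.assoc)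
  qed
  then have "(\<lambda>r. r + vD) ` closure R \<subseteq> closure R"
    by (intro image_closure_subset) (auto intro: continuous_intros)
  then show ?thesis using assms by blast
qed

lemma proj_closure_D_inter_R_eq_vD:
  assumes h2: "closure (D \<inter> R) = closure D \<inter> closure R" and vR0: "vR = 0"
  shows "proj (closure (D \<inter> R)) 0 = vD"
proof (rule proj_zero_eqI)
  show "vD \<in> closure (D \<inter> R)"
    using h2 vD_mem closure_R_add_vD[of 0] vR_mem vR0 by simp
  show "0 \<le> inner (w - vD) vD" if "w \<in> closure (D \<inter> R)" for w
    using that h2 vD_obtuse by simp
qed

end

theorem theorem4p3:
  fixes A B :: "'a::{real_inner, complete_space} \<Rightarrow> 'a set"
    and T :: "'a \<Rightarrow> 'a" and v vD vR :: 'a and D R Z Zt :: "'a set"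
  assumes mA: "maximal_monotone A" and mB: "maximal_monotone B"
    and T_def: "T = DR_op A B"
    and v_def: "v = proj (closure (range (\<lambda>x. x - T x))) 0"
    and D_def: "D = {a - b | a b. a \<in> op_dom A \<and> b \<in> op_dom B}"
    and R_def: "R = {a + b | a b. a \<in> op_ran A \<and> b \<in> op_ran B}"
    and vD_def: "vD = proj (closure D) 0"
    and vR_def: "vR = proj (closure R) 0"
    and h1: "closure (range (\<lambda>x. x - T x)) = closure (D \<inter> R)"
    and h2: "closure (D \<inter> R) = closure D \<inter> closure R"
    and Z_def: "Z = {x. \<exists>a\<in>A x. \<exists>b\<in>B (x - v). 0 = - v + a + b}"
    and Zt_def: "Zt = {x. \<exists>a\<in>A x. \<exists>b\<in>B (x - vD). 0 = - vR + a + b}"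
  shows "Zt \<subseteq> Z \<and> (vR = 0 \<longrightarrow> Zt = Z)"
proof -
  interpret maximal_monotone_pair A B D R vD vR
    using mA mB D_def R_def vD_def vR_def by unfold_locales
  have v: "v = proj (closure (D \<inter> R)) 0" using v_def h1 by simp
  have Zt_Z: "x \<in> Z" if x: "x \<in> Zt" for x
  proof -
    obtain a b where ab: "a \<in> A x" "b \<in> B (x - vD)" "a + b = vR"
      using x by (auto simp: Zt_def algebra_simps)
    with Zt_point_shift[OF ab] show ?thesis unfolding Z_def v by (force simp: algebra_simps)
  qed
  have Z_Zt: "x \<in> Zt" if vR0: "vR = 0" and x: "x \<in> Z" for x
  proof -
    have "v = vD" using proj_closure_D_inter_R_eq_vD[OF h2 vR0] v by simp
    then obtain a b where ab: "a \<in> A x" "b \<in> B (x - vD)" "a + b = vD"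
      using x by (auto simp: Z_def algebra_simps)
    with A_shift_vD[OF ab(1,2)] show ?thesis unfolding Zt_def vR0 by (force simp: algebra_simps)
  qed
  show ?thesis using Zt_Z Z_Zt by blast
qed

end
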